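(* Assume the high-level cost is $H(x,u,\theta)=L(x,u,\theta)+B(\theta)$ with $B(\theta)=\sum_j-\ln(g_j(\theta))$, where $g(\theta)\ge0\iff\theta\in\mathcal{T}$ and $\mathcal{T}\subset\mathbb{R}^c$ is compact. Let $H_k(\theta)=J^L(x_0^k,\theta)+B(\theta)$, let $\theta$ be a point at which $H_k$ is finite, and let $p$ be a descent direction for $H_k$ at $\theta$, i.e. $\nabla_\theta H_k(\theta)^Tp<0$. Then for constants $0<c_1<c_2<1$ there exists $\alpha>0$ satisfying the Wolfe conditions $H_k(\theta+\alpha p)\le H_k(\theta)+c_1\alpha\nabla_\theta H_k(\theta)^Tp$ and $\nabla_\theta H_k(\theta+\alpha p)^Tp\ge c_2\nabla_\theta H_k(\theta)^Tp$.
   Context: $J^L(x_0,\theta)$ is the optimal value of the low-level MPC program $\min_{x,u}L(x,u,\theta)$ s.t. $(x,u)\in\mathcal{C}(\theta)$, $x_{i+1}=f(x_i,u_i,\theta)$ with initial condition $x_0$; $x_0^k$ is the initial condition at time step $k$. *)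

theory Defs
  imports "HOL-Analysis.Analysis" "HOL-Library.Extended_Real"
begin

definition mpc_feasible ::
  "('x \<Rightarrow> 'u \<Rightarrow> 'p \<Rightarrow> 'x) \<Rightarrow> ('p \<Rightarrow> ((nat \<Rightarrow> 'x) \<times> (nat \<Rightarrow> 'u)) set)
   \<Rightarrow> nat \<Rightarrow> 'x \<Rightarrow> 'p \<Rightarrow> (nat \<Rightarrow> 'x) \<Rightarrow> (nat \<Rightarrow> 'u) \<Rightarrow> bool" where
  "mpc_feasible f C N x0 \<theta> x u \<longleftrightarrow>
     x 0 = x0 \<and> (x, u) \<in> C \<theta> \<and> (\<forall>i<N. x (Suc i) = f (x i) (u i) \<theta>)"

text \<open>Optimal value J^L(x0, theta) (extended real: +infinity if infeasible).\<close>
definition JL ::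
  "((nat \<Rightarrow> 'x) \<Rightarrow> (nat \<Rightarrow> 'u) \<Rightarrow> 'p \<Rightarrow> real) \<Rightarrow> ('x \<Rightarrow> 'u \<Rightarrow> 'p \<Rightarrow> 'x)
   \<Rightarrow> ('p \<Rightarrow> ((nat \<Rightarrow> 'x) \<times> (nat \<Rightarrow> 'u)) set) \<Rightarrow> nat \<Rightarrow> 'x \<Rightarrow> 'p \<Rightarrow> ereal" where
  "JL L f C N x0 \<theta> =
     (INF xu \<in> {(x, u). mpc_feasible f C N x0 \<theta> x u}. ereal (L (fst xu) (snd xu) \<theta>))"

definition barrier :: "(nat \<Rightarrow> 'p \<Rightarrow> real) \<Rightarrow> nat \<Rightarrow> 'p \<Rightarrow> ereal" where
  "barrier g m \<theta> =
     (if (\<forall>j<m. g j \<theta> > 0) then ereal (\<Sum>j<m. - ln (g j \<theta>)) else \<infinity>)"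

definition Hk ::
  "((nat \<Rightarrow> 'x) \<Rightarrow> (nat \<Rightarrow> 'u) \<Rightarrow> 'p \<Rightarrow> real) \<Rightarrow> ('x \<Rightarrow> 'u \<Rightarrow> 'p \<Rightarrow> 'x)
   \<Rightarrow> ('p \<Rightarrow> ((nat \<Rightarrow> 'x) \<times> (nat \<Rightarrow> 'u)) set) \<Rightarrow> nat \<Rightarrow> 'x
   \<Rightarrow> (nat \<Rightarrow> 'p \<Rightarrow> real) \<Rightarrow> nat \<Rightarrow> 'p \<Rightarrow> ereal" where
  "Hk L f C N x0 g m \<theta> = JL L f C N x0 \<theta> + barrier g m \<theta>"

definition dHk ::
  "((nat \<Rightarrow> 'x) \<Rightarrow> (nat \<Rightarrow> 'u) \<Rightarrow> 'p::real_normed_vector \<Rightarrow> real) \<Rightarrow> ('x \<Rightarrow> 'u \<Rightarrow> 'p \<Rightarrow> 'x)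
   \<Rightarrow> ('p \<Rightarrow> ((nat \<Rightarrow> 'x) \<times> (nat \<Rightarrow> 'u)) set) \<Rightarrow> nat \<Rightarrow> 'x
   \<Rightarrow> (nat \<Rightarrow> 'p \<Rightarrow> real) \<Rightarrow> nat \<Rightarrow> 'p \<Rightarrow> 'p \<Rightarrow> real" where
  "dHk L f C N x0 g m \<theta> p =
     frechet_derivative (\<lambda>t. real_of_ereal (Hk L f C N x0 g m t)) (at \<theta>) p"

end

(* The barrier makes H_k finite and differentiable exactly on the open set D where all g_j are
   positive, and the sublevel set {t \<in> D. H_k t \<le> H_k theta} is compact: J^L is bounded on the
   compact set T and every g_j is bounded above there, so a bound on the barrier sum bounds each
   single term - ln (g_j t) and keeps all g_j uniformly away from 0.
   Along the ray theta + alpha p this is the setting of the classical existence proof for Wolfe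
   steps (Nocedal and Wright, Lemma 3.1): psi alpha = H_k (theta + alpha p) - H_k theta
   - c1 alpha (grad H_k theta)^T p is negative for small alpha > 0; compactness of the sublevel set
   gives a first alpha > 0 with psi alpha \<ge> 0 whose segment [0, alpha] stays in D, and the mean
   value theorem on that segment yields a point satisfying both Wolfe conditions. *)

theory Submission
  imports Defs
begin

lemma wolfe_step_exists_real:
  fixes \<phi> \<phi>' :: "real \<Rightarrow> real" and S :: "real set"
  assumes S: "open S" "0 \<in> S"
    and deriv: "\<And>\<alpha>. \<alpha> \<in> S \<Longrightarrow> (\<phi> has_real_derivative \<phi>' \<alpha>) (at \<alpha>)"
    and descent: "\<phi>' 0 < 0"
    and sublevel: "compact {\<alpha> \<in> S. \<phi> \<alpha> \<le> \<phi> 0}"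
    and c: "0 \<le> c1" "c1 < 1" "c1 \<le> c2"
  shows "\<exists>\<alpha>>0. \<alpha> \<in> S \<and> \<phi> \<alpha> \<le> \<phi> 0 + c1 * \<alpha> * \<phi>' 0 \<and> c2 * \<phi>' 0 \<le> \<phi>' \<alpha>"
proof -
  define d where "d = \<phi>' 0"
  define K where "K = {\<alpha> \<in> S. \<phi> \<alpha> \<le> \<phi> 0}"
  define \<psi> where "\<psi> \<alpha> = \<phi> \<alpha> - \<phi> 0 - c1 * \<alpha> * d" for \<alpha>
  have \<psi>_deriv: "(\<psi> has_real_derivative \<phi>' \<alpha> - c1 * d) (at \<alpha>)" if "\<alpha> \<in> S" for \<alpha>
    unfolding \<psi>_def by (auto intro!: derivative_eq_intros deriv that)
  have \<psi>_cont: "continuous_on S \<psi>"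
    using \<psi>_deriv by (meson DERIV_isCont continuous_at_imp_continuous_on)
  have d_neg: "d < 0" using descent d_def by simp
  have \<psi>_le_imp_K: "\<alpha> \<in> K" if "\<alpha> \<in> S" "0 \<le> \<alpha>" "\<psi> \<alpha> \<le> 0" for \<alpha>
    using that c d_neg mult_nonneg_nonpos[of "c1 * \<alpha>" d] unfolding K_def \<psi>_def by simp
  obtain e where e: "0 < e" "{0..e} \<subseteq> S" "\<And>\<alpha>. 0 < \<alpha> \<Longrightarrow> \<alpha> \<le> e \<Longrightarrow> \<psi> \<alpha> < 0"
  proof -
    have "\<phi>' 0 - c1 * d < 0" using c d_neg d_def by (simp add: mult_less_cancel_right2)
    then obtain e1 where "e1 > 0" and e1: "\<And>h. 0 < h \<Longrightarrow> h < e1 \<Longrightarrow> \<psi> h < \<psi> 0"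
      using DERIV_neg_dec_right[OF \<psi>_deriv[OF S(2)]] by auto
    obtain r where "r > 0" and r: "ball 0 r \<subseteq> S" using S open_contains_ball by blast
    define e where "e = min e1 r / 2"
    have "{0..e} \<subseteq> ball 0 r" using \<open>r > 0\<close> \<open>e1 > 0\<close> by (auto simp: e_def)
    moreover have "\<psi> \<alpha> < 0" if "0 < \<alpha>" "\<alpha> \<le> e" for \<alpha>
      using e1[of \<alpha>] that \<open>r > 0\<close> \<open>e1 > 0\<close> by (simp add: e_def \<psi>_def)
    ultimately show thesis using that[of e] r \<open>r > 0\<close> \<open>e1 > 0\<close> by (simp add: e_def)
  qed
  \<comment> \<open>\<open>Inf W\<close> is the first point beyond \<open>e\<close> that lies outside \<open>S\<close> or where the strict
      Armijo inequality \<open>\<psi> < 0\<close> fails.\<close>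
  define W where "W = {e..} - (S \<inter> \<psi> -` {..<0})"
  define a where "a = Inf W"
  have "closed W"
    unfolding W_def by (intro closed_Diff closed_atLeast continuous_open_preimage \<psi>_cont S(1) open_lessThan)
  moreover have "W \<noteq> {}"
  proof -
    obtain B where B: "\<And>\<alpha>. \<alpha> \<in> K \<Longrightarrow> \<alpha> \<le> B"
      using compact_imp_bounded[OF sublevel] bounded_real unfolding K_def by (meson abs_le_D1)
    have "max e (B + 1) \<in> W"
      using B[of "max e (B + 1)"] \<psi>_le_imp_K[of "max e (B + 1)"] \<open>0 < e\<close> unfolding W_def by auto
    then show ?thesis by blast
  qed
  moreover have "bdd_below W" unfolding W_def by (rule bdd_belowI[of _ e]) auto
  ultimately have a_W: "a \<in> W" unfolding a_def using closed_contains_Inf by blast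
  have "0 < a" using a_W \<open>0 < e\<close> unfolding W_def by auto
  have below_a: "\<alpha> \<in> S \<and> \<psi> \<alpha> \<le> 0" if "0 \<le> \<alpha>" "\<alpha> < a" for \<alpha>
  proof (cases "\<alpha> \<le> e")
    case True
    then show ?thesis using e that by (cases "\<alpha> = 0") (auto simp: \<psi>_def less_imp_le)
  next
    case False
    have "\<alpha> \<notin> W" using cInf_lower[OF _ \<open>bdd_below W\<close>, of \<alpha>] that unfolding a_def by auto
    then show ?thesis using False unfolding W_def by auto
  qed
  have "{0..<a} \<subseteq> K" using below_a \<psi>_le_imp_K by auto
  then have "{0..a} \<subseteq> K"
    using closure_minimal[OF _ compact_imp_closed[OF sublevel[folded K_def]]]
      closure_atLeastLessThan[OF \<open>0 < a\<close>] by metis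
  then have a_S: "{0..a} \<subseteq> S" unfolding K_def by auto
  have "0 \<le> \<psi> a" using a_W a_S \<open>0 < a\<close> unfolding W_def by fastforce
  obtain l z where z: "0 < z" "z < a" "(\<psi> has_real_derivative l) (at z)" "\<psi> a - \<psi> 0 = (a - 0) * l"
    using MVT[OF \<open>0 < a\<close>] continuous_on_subset[OF \<psi>_cont a_S] a_S \<psi>_deriv
    by (metis atLeastAtMost_iff less_imp_le real_differentiable_def subsetD)
  have "z \<in> S" and "\<psi> z \<le> 0" using below_a z by auto
  have "l = \<phi>' z - c1 * d" using DERIV_unique[OF z(3) \<psi>_deriv[OF \<open>z \<in> S\<close>]] .
  moreover have "0 \<le> l" using z(4) \<open>0 \<le> \<psi> a\<close> \<open>0 < a\<close> by (simp add: \<psi>_def zero_le_mult_iff)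
  moreover have "c2 * d \<le> c1 * d" using c d_neg by (simp add: mult_right_mono_neg)
  ultimately have "c2 * d \<le> \<phi>' z" by simp
  then show ?thesis using z(1) \<open>z \<in> S\<close> \<open>\<psi> z \<le> 0\<close> unfolding \<psi>_def d_def by auto
qed

lemma compact_line_preimage:
  fixes \<theta> p :: "'a::real_normed_vector"
  assumes "compact S" "p \<noteq> 0"
  shows "compact {\<alpha>::real. \<theta> + \<alpha> *\<^sub>R p \<in> S}"
proof -
  have "closed ((\<lambda>\<alpha>::real. \<theta> + \<alpha> *\<^sub>R p) -` S)"
    using assms(1) by (intro continuous_closed_vimage compact_imp_closed continuous_intros)
  then have "closed {\<alpha>::real. \<theta> + \<alpha> *\<^sub>R p \<in> S}" by (simp add: vimage_def)
  moreover obtain R where R: "\<And>t. t \<in> S \<Longrightarrow> norm t \<le> R"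
    using compact_imp_bounded[OF assms(1)] bounded_iff by blast
  have "\<bar>\<alpha>\<bar> \<le> (R + norm \<theta>) / norm p" if "\<theta> + \<alpha> *\<^sub>R p \<in> S" for \<alpha>
  proof -
    have "\<bar>\<alpha>\<bar> * norm p = norm ((\<theta> + \<alpha> *\<^sub>R p) - \<theta>)" by simp
    also have "\<dots> \<le> R + norm \<theta>" using norm_triangle_ineq4 R[OF that] by (smt (verit))
    finally show ?thesis using assms(2) by (simp add: field_simps)
  qed
  then have "bounded {\<alpha>::real. \<theta> + \<alpha> *\<^sub>R p \<in> S}"
    unfolding bounded_iff real_norm_def by blast
  ultimately show ?thesis by (simp add: compact_eq_bounded_closed)
qed

lemma wolfe_step_exists:
  fixes F :: "'a::real_normed_vector \<Rightarrow> real"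
  assumes D: "open D" "\<theta> \<in> D" and F_diff: "\<And>t. t \<in> D \<Longrightarrow> F differentiable (at t)"
    and descent: "frechet_derivative F (at \<theta>) p < 0"
    and sublevel: "compact {t \<in> D. F t \<le> F \<theta>}"
    and c: "0 \<le> c1" "c1 < 1" "c1 \<le> c2"
  shows "\<exists>\<alpha>>0. \<theta> + \<alpha> *\<^sub>R p \<in> D
           \<and> F (\<theta> + \<alpha> *\<^sub>R p) \<le> F \<theta> + c1 * \<alpha> * frechet_derivative F (at \<theta>) p
           \<and> c2 * frechet_derivative F (at \<theta>) p \<le> frechet_derivative F (at (\<theta> + \<alpha> *\<^sub>R p)) p"
proof -
  define F' where "F' t = frechet_derivative F (at t)" for t
  define S where "S = (\<lambda>\<alpha>::real. \<theta> + \<alpha> *\<^sub>R p) -` D"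
  have F': "(F has_derivative F' t) (at t)" if "t \<in> D" for t
    unfolding F'_def using F_diff[OF that] frechet_derivative_works by blast
  have line_deriv: "((\<lambda>\<alpha>. F (\<theta> + \<alpha> *\<^sub>R p)) has_real_derivative F' (\<theta> + \<alpha> *\<^sub>R p) p) (at \<alpha>)"
    if "\<alpha> \<in> S" for \<alpha>
  proof -
    have on_line: "\<theta> + \<alpha> *\<^sub>R p \<in> D" using that S_def by simp
    have "((\<lambda>\<alpha>. \<theta> + \<alpha> *\<^sub>R p) has_derivative (\<lambda>h. h *\<^sub>R p)) (at \<alpha>)"
      by (auto intro!: derivative_eq_intros)
    from has_derivative_compose[OF this F'[OF on_line]]
    have "((\<lambda>\<alpha>. F (\<theta> + \<alpha> *\<^sub>R p)) has_derivative (\<lambda>h. F' (\<theta> + \<alpha> *\<^sub>R p) (h *\<^sub>R p))) (at \<alpha>)" .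
    moreover have "linear (F' (\<theta> + \<alpha> *\<^sub>R p))" using F'[OF on_line] has_derivative_linear by blast
    ultimately show ?thesis
      by (intro has_derivative_imp_has_field_derivative) (simp_all add: linear_scale)
  qed
  have "p \<noteq> 0"
    using descent linear_0[OF has_derivative_linear[OF F'[OF D(2)]]] F'_def by auto
  have "open S"
    unfolding S_def using D(1) by (intro continuous_open_vimage continuous_intros)
  moreover have "0 \<in> S" using D(2) S_def by simp
  moreover have "compact {\<alpha> \<in> S. F (\<theta> + \<alpha> *\<^sub>R p) \<le> F (\<theta> + 0 *\<^sub>R p)}"
    using compact_line_preimage[OF sublevel \<open>p \<noteq> 0\<close>, of \<theta>] by (simp add: S_def)
  moreover have "F' (\<theta> + 0 *\<^sub>R p) p < 0" using descent F'_def by simp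
  ultimately show ?thesis
    using wolfe_step_exists_real[of S, OF _ _ line_deriv _ _ c] unfolding S_def F'_def by simp
qed

lemma neg_ln_le_sum_neg_ln:
  fixes y :: "nat \<Rightarrow> real"
  assumes "j < m" "\<And>i. i < m \<Longrightarrow> 0 < y i" "\<And>i. i < m \<Longrightarrow> y i \<le> G"
  shows "- ln (y j) \<le> (\<Sum>i<m. - ln (y i)) + (real m - 1) * ln G"
proof -
  have "ln (y i) \<le> ln G" if "i < m" for i
    using assms(2,3) that by (meson ln_le_cancel_iff order_less_le_trans)
  then have "ln G - ln (y j) \<le> (\<Sum>i<m. ln G - ln (y i))"
    by (intro member_le_sum) (use assms(1) in auto)
  also have "\<dots> = (\<Sum>i<m. - ln (y i)) + real m * ln G"
    by (simp add: sum_subtractf sum_negf)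
  finally show ?thesis by (simp add: algebra_simps)
qed

lemma compact_log_barrier_sublevel:
  fixes J :: "'a::t2_space \<Rightarrow> real" and g :: "nat \<Rightarrow> 'a \<Rightarrow> real"
  assumes T: "compact T" "{t. \<forall>j<m. 0 < g j t} \<subseteq> T"
    and J_cont: "continuous_on T J" and g_cont: "\<And>j. j < m \<Longrightarrow> continuous_on T (g j)"
  shows "compact {t. (\<forall>j<m. 0 < g j t) \<and> J t + (\<Sum>j<m. - ln (g j t)) \<le> M}"
proof -
  have "bounded (J ` T)"
    using compact_imp_bounded[OF compact_continuous_image[OF J_cont T(1)]] .
  then obtain K where K: "\<And>t. t \<in> T \<Longrightarrow> \<bar>J t\<bar> \<le> K"
    unfolding bounded_real by auto
  have "bounded ((\<lambda>t. \<Sum>j<m. \<bar>g j t\<bar>) ` T)"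
    by (intro compact_imp_bounded compact_continuous_image T(1) continuous_intros) (simp add: g_cont)
  then obtain B where B: "\<And>t. t \<in> T \<Longrightarrow> \<bar>\<Sum>j<m. \<bar>g j t\<bar>\<bar> \<le> B"
    unfolding bounded_real by auto
  have g_B: "g j t \<le> B" if "t \<in> T" "j < m" for j t
  proof -
    have "g j t \<le> (\<Sum>j<m. \<bar>g j t\<bar>)"
      using member_le_sum[of j "{..<m}" "\<lambda>j. \<bar>g j t\<bar>"] that by auto
    then show ?thesis using B[OF that(1)] by simp
  qed
  \<comment> \<open>By \<open>neg_ln_le_sum_neg_ln\<close>, \<open>\<epsilon>\<close> is a lower bound for every \<open>g j\<close> on the sublevel set.\<close>
  define \<epsilon> where "\<epsilon> = exp (- (M + K + (real m - 1) * ln B))"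
  define S where "S = T \<inter> (\<Inter>j<m. T \<inter> g j -` {\<epsilon>..})"
  define h where "h t = J t + (\<Sum>j<m. - ln (g j t))" for t
  have "compact S"
    unfolding S_def using compact_imp_closed[OF T(1)]
    by (intro compact_Int_closed T(1) closed_INT ballI continuous_closed_preimage g_cont closed_atLeast)
       auto
  have S_T: "S \<subseteq> T" unfolding S_def by blast
  have S_pos: "0 < g j t" if "t \<in> S" "j < m" for t j
    using that less_le_trans[OF exp_gt_zero] unfolding S_def \<epsilon>_def by blast
  have set_eq: "{t. (\<forall>j<m. 0 < g j t) \<and> J t + (\<Sum>j<m. - ln (g j t)) \<le> M} = S \<inter> h -` {..M}"
  proof (intro equalityI subsetI)
    fix t assume t: "t \<in> {t. (\<forall>j<m. 0 < g j t) \<and> J t + (\<Sum>j<m. - ln (g j t)) \<le> M}"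
    then have "t \<in> T" using T(2) by auto
    have "\<epsilon> \<le> g j t" if "j < m" for j
    proof -
      have "- ln (g j t) \<le> (\<Sum>j<m. - ln (g j t)) + (real m - 1) * ln B"
        using neg_ln_le_sum_neg_ln[of j m "\<lambda>j. g j t" B] that t g_B[OF \<open>t \<in> T\<close>] by auto
      also have "\<dots> \<le> M + K + (real m - 1) * ln B"
        using t abs_le_D2[OF K[OF \<open>t \<in> T\<close>]] by simp
      finally have "\<epsilon> \<le> exp (ln (g j t))" unfolding \<epsilon>_def by simp
      then show ?thesis using t that by simp
    qed
    then show "t \<in> S \<inter> h -` {..M}" using t \<open>t \<in> T\<close> unfolding S_def h_def by auto
  next
    fix t assume "t \<in> S \<inter> h -` {..M}"
    then show "t \<in> {t. (\<forall>j<m. 0 < g j t) \<and> J t + (\<Sum>j<m. - ln (g j t)) \<le> M}"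
      using S_pos[of t] unfolding h_def by auto
  qed
  have "continuous_on S J" using continuous_on_subset[OF J_cont S_T] .
  moreover have "continuous_on S (\<lambda>t. - ln (g j t))" if "j < m" for j
    using continuous_on_subset[OF g_cont[OF that] S_T]
    by (intro continuous_on_minus continuous_on_ln) (auto dest: S_pos[OF _ that])
  ultimately have "continuous_on S h"
    unfolding h_def by (intro continuous_on_add continuous_on_sum) auto
  then have "closed (S \<inter> h -` {..M})"
    using continuous_closed_preimage compact_imp_closed[OF \<open>compact S\<close>] closed_atMost by blast
  from compact_Int_closed[OF \<open>compact S\<close> this] show ?thesis
    unfolding set_eq Int_left_absorb .
qed

lemma open_Collect_all_pos:
  fixes g :: "nat \<Rightarrow> 'a::topological_space \<Rightarrow> real"
  assumes "open U" "{t. \<forall>j<m. 0 < g j t} \<subseteq> U" "\<And>j. j < m \<Longrightarrow> continuous_on U (g j)"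
  shows "open {t. \<forall>j<m. 0 < g j t}"
proof -
  have "{t. \<forall>j<m. 0 < g j t} = U \<inter> (\<Inter>j<m. U \<inter> g j -` {0<..})" using assms(2) by auto
  moreover have "open (\<Inter>j<m. U \<inter> g j -` {0<..})"
    using assms(1,3) by (intro open_INT) (auto intro: continuous_open_preimage)
  ultimately show ?thesis using assms(1) by (metis open_Int)
qed

lemma differentiable_sum_neg_ln:
  fixes g :: "nat \<Rightarrow> 'a::real_normed_vector \<Rightarrow> real"
  assumes "\<And>j. j < m \<Longrightarrow> g j differentiable (at t)" "\<And>j. j < m \<Longrightarrow> 0 < g j t"
  shows "(\<lambda>s. \<Sum>j<m. - ln (g j s)) differentiable (at t)"
proof (intro differentiable_sum differentiable_minus ballI)
  fix j assume "j \<in> {..<m}"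
  then obtain G' where "(g j has_derivative G') (at t)" and "0 < g j t"
    using assms differentiable_def by fastforce
  from has_derivative_ln[OF this(2,1)] show "(\<lambda>s. ln (g j s)) differentiable (at t)"
    by (rule differentiableI)
qed simp

lemma Hk_eq_ereal:
  assumes "\<forall>j<m. 0 < g j t" "\<bar>JL L f C N x0 t\<bar> \<noteq> \<infinity>"
  shows "Hk L f C N x0 g m t = ereal (real_of_ereal (JL L f C N x0 t) + (\<Sum>j<m. - ln (g j t)))"
proof -
  obtain r where "JL L f C N x0 t = ereal r" using assms(2) by (cases "JL L f C N x0 t") auto
  then show ?thesis using assms(1) by (simp add: Hk_def barrier_def)
qed

lemma Hk_finite_imp_pos:
  assumes "\<bar>Hk L f C N x0 g m t\<bar> \<noteq> \<infinity>"
  shows "\<forall>j<m. 0 < g j t"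
  using assms by (auto simp: Hk_def barrier_def split: if_splits)

lemma differentiable_real_Hk:
  fixes g :: "nat \<Rightarrow> 'p::real_normed_vector \<Rightarrow> real"
  assumes D_open: "open {s. \<forall>j<m. 0 < g j s}" and t: "\<forall>j<m. 0 < g j t"
    and JL_finite: "\<And>s. (\<forall>j<m. 0 < g j s) \<Longrightarrow> \<bar>JL L f C N x0 s\<bar> \<noteq> \<infinity>"
    and JL_diff: "(\<lambda>s. real_of_ereal (JL L f C N x0 s)) differentiable (at t)"
    and g_diff: "\<And>j. j < m \<Longrightarrow> g j differentiable (at t)"
  shows "(\<lambda>s. real_of_ereal (Hk L f C N x0 g m s)) differentiable (at t)"
proof -
  have "(\<lambda>s. real_of_ereal (JL L f C N x0 s) + (\<Sum>j<m. - ln (g j s))) differentiable (at t)"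
    using JL_diff g_diff t by (intro differentiable_add differentiable_sum_neg_ln) auto
  then obtain H' where
    "((\<lambda>s. real_of_ereal (JL L f C N x0 s) + (\<Sum>j<m. - ln (g j s))) has_derivative H') (at t)"
    unfolding differentiable_def by blast
  then have "((\<lambda>s. real_of_ereal (Hk L f C N x0 g m s)) has_derivative H') (at t)"
    by (rule has_derivative_transform_within_open[OF _ D_open])
       (simp add: t, simp add: Hk_eq_ereal JL_finite)
  then show ?thesis by (rule differentiableI)
qed

lemma compact_real_Hk_sublevel:
  fixes g :: "nat \<Rightarrow> 'p::t2_space \<Rightarrow> real"
  assumes T: "compact T" "{t. \<forall>j<m. 0 < g j t} \<subseteq> T"
    and JL_finite: "\<And>t. (\<forall>j<m. 0 < g j t) \<Longrightarrow> \<bar>JL L f C N x0 t\<bar> \<noteq> \<infinity>"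
    and JL_cont: "continuous_on T (\<lambda>t. real_of_ereal (JL L f C N x0 t))"
    and g_cont: "\<And>j. j < m \<Longrightarrow> continuous_on T (g j)"
  shows "compact {t. (\<forall>j<m. 0 < g j t) \<and> real_of_ereal (Hk L f C N x0 g m t) \<le> M}"
proof -
  have "{t. (\<forall>j<m. 0 < g j t) \<and> real_of_ereal (Hk L f C N x0 g m t) \<le> M}
      = {t. (\<forall>j<m. 0 < g j t) \<and> real_of_ereal (JL L f C N x0 t) + (\<Sum>j<m. - ln (g j t)) \<le> M}"
    by (intro Collect_cong conj_cong refl) (simp add: Hk_eq_ereal JL_finite)
  then show ?thesis using compact_log_barrier_sublevel[OF T JL_cont g_cont] by simp
qed

theorem lemma4:
  fixes L :: "(nat \<Rightarrow> 'x) \<Rightarrow> (nat \<Rightarrow> 'u) \<Rightarrow> real^'c \<Rightarrow> real"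
    and f :: "'x \<Rightarrow> 'u \<Rightarrow> real^'c \<Rightarrow> 'x"
    and C :: "real^'c \<Rightarrow> ((nat \<Rightarrow> 'x) \<times> (nat \<Rightarrow> 'u)) set"
    and N :: nat and x0k :: 'x
    and g :: "nat \<Rightarrow> real^'c \<Rightarrow> real" and m :: nat
    and T U :: "(real^'c) set"
    and \<theta> p :: "real^'c" and c1 c2 :: real
  assumes T_compact: "compact T"
    and U_open: "open U" and TU: "T \<subseteq> U"
    and g_T: "\<forall>t. (\<forall>j<m. g j t \<ge> 0) \<longleftrightarrow> t \<in> T"
    and g_diff: "\<forall>j<m. \<forall>t\<in>U. g j differentiable (at t)"
    and JL_finite: "\<forall>t\<in>U. \<bar>JL L f C N x0k t\<bar> \<noteq> \<infinity>"
    and JL_diff: "\<forall>t\<in>U. (\<lambda>s. real_of_ereal (JL L f C N x0k s)) differentiable (at t)"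
    and H_finite: "\<bar>Hk L f C N x0k g m \<theta>\<bar> \<noteq> \<infinity>"
    and descent: "dHk L f C N x0k g m \<theta> p < 0"
    and c: "0 < c1" "c1 < c2" "c2 < 1"
  shows "\<exists>\<alpha>>0.
           Hk L f C N x0k g m (\<theta> + \<alpha> *\<^sub>R p)
             \<le> Hk L f C N x0k g m \<theta> + ereal (c1 * \<alpha> * dHk L f C N x0k g m \<theta> p)
         \<and> dHk L f C N x0k g m (\<theta> + \<alpha> *\<^sub>R p) p \<ge> c2 * dHk L f C N x0k g m \<theta> p"
proof -
  define F where "F = (\<lambda>t. real_of_ereal (Hk L f C N x0k g m t))"
  define D where "D = {t. \<forall>j<m. 0 < g j t}"
  have D_T: "D \<subseteq> T" using g_T by (auto simp: D_def less_imp_le)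
  with TU have D_U: "D \<subseteq> U" by blast
  have JL_finite_D: "\<bar>JL L f C N x0k t\<bar> \<noteq> \<infinity>" if "\<forall>j<m. 0 < g j t" for t
    using subsetD[OF D_U, of t] that JL_finite by (simp add: D_def)
  have g_cont: "continuous_on U (g j)" if "j < m" for j
    using g_diff that
    by (intro continuous_at_imp_continuous_on ballI differentiable_imp_continuous_within) auto
  have JL_cont: "continuous_on T (\<lambda>t. real_of_ereal (JL L f C N x0k t))"
    using JL_diff TU
    by (intro continuous_at_imp_continuous_on ballI differentiable_imp_continuous_within) auto
  have "open D" unfolding D_def by (rule open_Collect_all_pos[OF U_open D_U[unfolded D_def] g_cont])
  have "\<theta> \<in> D" using Hk_finite_imp_pos[OF H_finite] by (simp add: D_def)
  have F_diff: "F differentiable (at t)" if "t \<in> D" for t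
    unfolding F_def using that D_U JL_diff g_diff JL_finite_D
    by (intro differentiable_real_Hk[OF \<open>open D\<close>[unfolded D_def]]) (auto simp: D_def)
  have sublevel: "compact {t \<in> D. F t \<le> F \<theta>}"
    using compact_real_Hk_sublevel[OF T_compact D_T[unfolded D_def] JL_finite_D JL_cont
        continuous_on_subset[OF g_cont TU]]
    by (simp add: D_def F_def)
  have dHk_F: "dHk L f C N x0k g m t q = frechet_derivative F (at t) q" for t q
    by (simp add: dHk_def F_def)
  have Hk_F: "Hk L f C N x0k g m t = ereal (F t)" if "t \<in> D" for t
    using that by (simp add: D_def F_def Hk_eq_ereal JL_finite_D)
  have "frechet_derivative F (at \<theta>) p < 0" using descent by (simp add: dHk_F)
  with c have "\<exists>\<alpha>>0. \<theta> + \<alpha> *\<^sub>R p \<in> D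
      \<and> F (\<theta> + \<alpha> *\<^sub>R p) \<le> F \<theta> + c1 * \<alpha> * frechet_derivative F (at \<theta>) p
      \<and> c2 * frechet_derivative F (at \<theta>) p \<le> frechet_derivative F (at (\<theta> + \<alpha> *\<^sub>R p)) p"
    by (intro wolfe_step_exists[OF \<open>open D\<close> \<open>\<theta> \<in> D\<close> F_diff _ sublevel]) auto
  then show ?thesis using Hk_F \<open>\<theta> \<in> D\<close> by (auto simp: dHk_F)
qed

end
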